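(* Let $d \geq 1$ and let $\mathbb{P}$ be a probability measure on $\Omega = \mathbb{R}^{\mathcal{E}^d}$ satisfying assumptions A1 and A2 below. For $x \in \mathbb{Z}^d$, let $C_x$ be the subgraph of the directed nearest neighbor graph $\mathcal{N}_D$ induced by the vertices $y$ such that $y \to x$ in $\mathcal{N}_D$. Then $\mathbb{P}$-almost surely, $C_x$ is finite for all $x \in \mathbb{Z}^d$.
   Context: $\mathcal{E}^d$ is the set of nearest-neighbor edges $\{x,y\}$ ($\|x-y\|_1=1$) of $\mathbb{Z}^d$. $\Omega=\mathbb{R}^{\mathcal{E}^d}$ carries the product Borel sigma-algebra; $\omega\in\Omega$ assigns a weight $\omega(e)$ to each edge. Assumption A1 (translation invariance): for every $z\in\mathbb{Z}^d$, $\mathbb{P}=\mathbb{P}\circ T_z^{-1}$, where $(T_z\omega)(e)=\omega(e+z)$ and $e+z=\{x+z,y+z\}$ for $e=\{x,y\}$. Assumption A2: for any distinct $e,f\in\mathcal{E}^d$, $\mathbb{P}(\omega(e)=\omega(f))=0$. The directed nearest neighbor graph $\mathcal{N}_D$ has vertex set $\mathbb{Z}^d$ and directed edges $\langle x,y\rangle$ for all $\{x,y\}\in\mathcal{E}^d$ with $\omega(\{x,y\})\le\omega(\{x,z\})$ for all $z$ with $\{x,z\}\in\mathcal{E}^d$ (each vertex points to the neighbor(s) minimizing the weight). For vertices $x,y$ of a directed graph, $x\to y$ means there is a directed path from $x$ to $y$; by convention $x\to x$. *)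

theory Defs
  imports "HOL-Probability.Probability"
begin

text \<open>The lattice Z^d is int ^ 'd for a finite index type 'd (so d = CARD('d) >= 1).
  Edges of Z^d are unordered pairs {x,y} with L1 distance 1.\<close>

definition l1dist :: "int ^ 'd::finite \<Rightarrow> int ^ 'd \<Rightarrow> int" where
  "l1dist x y = (\<Sum>i\<in>UNIV. \<bar>x $ i - y $ i\<bar>)"

definition lattice_edges :: "(int ^ 'd::finite) set set" where
  "lattice_edges = {{x, y} | x y. l1dist x y = 1}"

definition Omega :: "((int ^ 'd::finite) set \<Rightarrow> real) measure" where
  "Omega = PiM lattice_edges (\<lambda>_. borel)"

definition shift :: "int ^ 'd::finite \<Rightarrow> ((int ^ 'd) set \<Rightarrow> real) \<Rightarrow> ((int ^ 'd) set \<Rightarrow> real)" where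
  "shift z \<omega> = (\<lambda>e\<in>lattice_edges. \<omega> ((\<lambda>v. v + z) ` e))"

definition nnd_edge :: "((int ^ 'd::finite) set \<Rightarrow> real) \<Rightarrow> int ^ 'd \<Rightarrow> int ^ 'd \<Rightarrow> bool" where
  "nnd_edge \<omega> x y \<longleftrightarrow> {x, y} \<in> lattice_edges \<and>
     (\<forall>z. {x, z} \<in> lattice_edges \<longrightarrow> \<omega> {x, y} \<le> \<omega> {x, z})"

abbreviation reaches :: "((int ^ 'd::finite) set \<Rightarrow> real) \<Rightarrow> int ^ 'd \<Rightarrow> int ^ 'd \<Rightarrow> bool" where
  "reaches \<omega> \<equiv> (nnd_edge \<omega>)\<^sup>*\<^sup>*"

end

theory Submission
  imports Defs
begin

text \<open>Mass transport. Without ties every vertex b has a unique nearest neighbour b' and the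
  weights of the edges met along a forward path are non-increasing, strictly so unless the path
  closes a 2-cycle. Give b the weight W(b) = arctan w{b,b'} - arctan w{b',b''} + [b'' = b] > 0
  and let every vertex a send the mass W(b) to each b it reaches. The arctan terms telescope
  along the forward path of a, and at most two vertices of that path lie on a 2-cycle, so a
  sends at most pi + 2. By translation invariance the expected mass received by x equals the
  expected mass sent by x. The mass received is W(x) |C_x|, hence C_x is almost surely finite.\<close>

lemma sum_eq_single:
  assumes "finite A" "a \<in> A" "\<And>x. x \<in> A \<Longrightarrow> x \<noteq> a \<Longrightarrow> f x = 0"
  shows "sum f A = f a"
  using sum.mono_neutral_right[of A "{a}" f] assms by auto

lemma funpow_period2_in_cycle: "f (f b) = b \<Longrightarrow> (f ^^ j) b \<in> {b, f b}"
  by (induction j) auto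

lemma orbit_period2_points_subset:
  fixes f :: "'a \<Rightarrow> 'a"
  shows "\<exists>b0. {b \<in> range (\<lambda>k. (f ^^ k) a). f (f b) = b} \<subseteq> {b0, f b0}"
proof (cases "\<exists>i. f (f ((f ^^ i) a)) = (f ^^ i) a")
  case True
  then obtain i where cycle: "f (f ((f ^^ i) a)) = (f ^^ i) a" by blast
  have "(f ^^ j) a \<in> {(f ^^ i) a, f ((f ^^ i) a)}" if "f (f ((f ^^ j) a)) = (f ^^ j) a" for j
  proof (cases "i \<le> j")
    case True
    then have "(f ^^ j) a = (f ^^ (j - i)) ((f ^^ i) a)"
      by (metis funpow_add comp_apply le_add_diff_inverse2)
    then show ?thesis using funpow_period2_in_cycle[where f = f, OF cycle] by simp
  next
    case False
    then have "(f ^^ i) a = (f ^^ (i - j)) ((f ^^ j) a)"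
      by (metis funpow_add comp_apply le_add_diff_inverse2 nat_le_linear)
    then show ?thesis using funpow_period2_in_cycle[where f = f and j = "i - j", OF that] that by auto
  qed
  then show ?thesis by blast
qed auto

lemma sum_orbit_decrements_le:
  fixes f :: "'a \<Rightarrow> 'a" and g :: "'a \<Rightarrow> real"
  assumes "finite B" "B \<subseteq> range (\<lambda>k. (f ^^ k) a)"
    and decr: "\<And>b. g (f b) \<le> g b" and bounded: "\<And>b. \<bar>g b\<bar> \<le> c"
  shows "(\<Sum>b\<in>B. g b - g (f b)) \<le> 2 * c"
proof -
  obtain K where "finite K" "B = (\<lambda>k. (f ^^ k) a) ` K"
    using assms(1,2) finite_subset_image by metis
  then obtain N where N: "B \<subseteq> (\<lambda>k. (f ^^ k) a) ` {..<N}"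
    using finite_nat_bounded by (metis image_mono)
  have "(\<Sum>b\<in>B. g b - g (f b)) \<le> (\<Sum>b\<in>(\<lambda>k. (f ^^ k) a) ` {..<N}. g b - g (f b))"
    using N decr by (intro sum_mono2) auto
  also have "\<dots> \<le> (\<Sum>k<N. g ((f ^^ k) a) - g ((f ^^ Suc k) a))"
    using decr sum_image_le[of "{..<N}" "\<lambda>b. g b - g (f b)" "\<lambda>k. (f ^^ k) a"] by simp
  also have "\<dots> = g a - g ((f ^^ N) a)"
    by (subst sum_lessThan_telescope') simp
  also have "\<dots> \<le> 2 * c"
    using bounded[of a] bounded[of "(f ^^ N) a"] by (simp add: abs_le_iff)
  finally show ?thesis .
qed

lemma nn_integral_count_space_eq_suminf:
  fixes f :: "'a::countable \<Rightarrow> ennreal"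
  assumes "infinite (UNIV :: 'a set)"
  shows "(\<integral>\<^sup>+x. f x \<partial>count_space UNIV) = (\<Sum>n. f (from_nat_into UNIV n))"
proof -
  have "bij_betw (from_nat_into (UNIV :: 'a set)) UNIV UNIV"
    using bij_betw_from_nat_into[OF countableI_type assms] .
  then have "(\<integral>\<^sup>+x. f x \<partial>count_space UNIV) = (\<integral>\<^sup>+n. f (from_nat_into UNIV n) \<partial>count_space UNIV)"
    by (rule nn_integral_bij_count_space[symmetric])
  then show ?thesis
    by (simp add: nn_integral_count_space_nat)
qed

lemma nn_integral_count_space_le:
  fixes f :: "'a::countable \<Rightarrow> ennreal"
  assumes "\<And>F. finite F \<Longrightarrow> sum f F \<le> C"
  shows "(\<integral>\<^sup>+x. f x \<partial>count_space UNIV) \<le> C"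
proof (cases "finite (UNIV :: 'a set)")
  case True
  then show ?thesis
    using assms by (simp add: nn_integral_count_space_finite)
next
  case False
  have inj: "inj_on (from_nat_into (UNIV :: 'a set)) A" for A
    using bij_betw_from_nat_into[OF countableI_type False]
    by (meson bij_betw_imp_inj_on inj_on_subset subset_UNIV)
  have "(\<Sum>n. f (from_nat_into UNIV n)) \<le> C"
  proof (rule suminf_le_const)
    show "(\<Sum>i<n. f (from_nat_into UNIV i)) \<le> C" for n
      using assms[of "from_nat_into UNIV ` {..<n}"] by (simp add: sum.reindex[OF inj])
  qed simp
  then show ?thesis
    by (simp add: nn_integral_count_space_eq_suminf[OF False])
qed

lemma borel_measurable_nn_integral_count_space:
  fixes f :: "'i::countable \<Rightarrow> 'a \<Rightarrow> ennreal"
  assumes [measurable]: "\<And>i. f i \<in> borel_measurable M"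
  shows "(\<lambda>x. \<integral>\<^sup>+i. f i x \<partial>count_space UNIV) \<in> borel_measurable M"
proof (cases "finite (UNIV :: 'i set)")
  case True
  then show ?thesis
    by (simp add: nn_integral_count_space_finite)
next
  case False
  then show ?thesis
    unfolding nn_integral_count_space_eq_suminf[OF False] by measurable
qed

lemma mass_transport:
  fixes F :: "'g::{countable, ab_group_add} \<Rightarrow> 'g \<Rightarrow> 'a \<Rightarrow> ennreal"
    and T :: "'g \<Rightarrow> 'a \<Rightarrow> 'a"
  assumes T_measurable: "\<And>z. T z \<in> M \<rightarrow>\<^sub>M M"
    and T_preserving: "\<And>z. distr M M (T z) = M"
    and F_measurable: "\<And>a b. F a b \<in> borel_measurable M"
    and F_covariant: "\<And>a b z \<omega>. F a b (T z \<omega>) = F (a + z) (b + z) \<omega>"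
  shows "(\<integral>\<^sup>+\<omega>. (\<integral>\<^sup>+b. F x b \<omega> \<partial>count_space UNIV) \<partial>M)
       = (\<integral>\<^sup>+\<omega>. (\<integral>\<^sup>+a. F a x \<omega> \<partial>count_space UNIV) \<partial>M)"
proof -
  have "(\<integral>\<^sup>+\<omega>. (\<integral>\<^sup>+b. F x b \<omega> \<partial>count_space UNIV) \<partial>M)
      = (\<integral>\<^sup>+b. (\<integral>\<^sup>+\<omega>. F x b \<omega> \<partial>M) \<partial>count_space UNIV)"
    by (rule nn_integral_count_space_nn_integral) (auto intro: F_measurable)
  \<comment> \<open>translation by b - x carries the pair (x + x - b, x) to (x, b)\<close>
  also have "\<dots> = (\<integral>\<^sup>+b. (\<integral>\<^sup>+\<omega>. F (x + x - b) x \<omega> \<partial>M) \<partial>count_space UNIV)"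
  proof (rule nn_integral_cong)
    fix b
    have "(\<integral>\<^sup>+\<omega>. F (x + x - b) x \<omega> \<partial>M) = (\<integral>\<^sup>+\<omega>. F (x + x - b) x \<omega> \<partial>distr M M (T (b - x)))"
      by (simp add: T_preserving)
    also have "\<dots> = (\<integral>\<^sup>+\<omega>. F (x + x - b) x (T (b - x) \<omega>) \<partial>M)"
      by (rule nn_integral_distr[OF T_measurable]) (simp add: F_measurable)
    also have "\<dots> = (\<integral>\<^sup>+\<omega>. F x b \<omega> \<partial>M)"
      by (simp add: F_covariant algebra_simps)
    finally show "(\<integral>\<^sup>+\<omega>. F x b \<omega> \<partial>M) = (\<integral>\<^sup>+\<omega>. F (x + x - b) x \<omega> \<partial>M)" ..
  qed
  also have "\<dots> = (\<integral>\<^sup>+a. (\<integral>\<^sup>+\<omega>. F a x \<omega> \<partial>M) \<partial>count_space UNIV)"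
    by (rule nn_integral_bij_count_space) (rule bij_betwI[where g = "\<lambda>b. x + x - b"]; simp)
  also have "\<dots> = (\<integral>\<^sup>+\<omega>. (\<integral>\<^sup>+a. F a x \<omega> \<partial>count_space UNIV) \<partial>M)"
    by (rule nn_integral_count_space_nn_integral[symmetric]) (auto intro: F_measurable)
  finally show ?thesis .
qed

type_synonym 'd edge_weights = "(int ^ 'd) set \<Rightarrow> real"

lemma l1dist_commute: "l1dist x y = l1dist y x"
  unfolding l1dist_def by (simp add: abs_minus_commute)

lemma l1dist_add_right: "l1dist (x + z) (y + z) = l1dist x y"
  unfolding l1dist_def by simp

lemma doubleton_in_lattice_edges_iff: "{x, y} \<in> lattice_edges \<longleftrightarrow> l1dist x y = 1"
  unfolding lattice_edges_def by (auto simp: doubleton_eq_iff l1dist_commute)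

lemma lattice_edge_neq: "{x, y} \<in> lattice_edges \<Longrightarrow> x \<noteq> y"
  by (auto simp: doubleton_in_lattice_edges_iff l1dist_def)

lemma lattice_edge_translate: "{x + z, y + z} \<in> lattice_edges \<longleftrightarrow> {x, y} \<in> lattice_edges"
  by (simp add: doubleton_in_lattice_edges_iff l1dist_add_right)

lemma image_translate_lattice_edge:
  assumes "e \<in> lattice_edges"
  shows "(\<lambda>v. v + z) ` e \<in> lattice_edges"
proof -
  obtain x y where "e = {x, y}" "{x, y} \<in> lattice_edges"
    using assms unfolding lattice_edges_def by blast
  then show ?thesis using lattice_edge_translate[of x z y] by simp
qed

lemma countable_lattice_edges: "countable lattice_edges"
proof -
  have "lattice_edges \<subseteq> (\<lambda>(x, y). {x, y}) ` UNIV"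
    unfolding lattice_edges_def by auto
  then show ?thesis by (rule countable_subset) simp
qed

definition lattice_nbrs :: "int ^ 'd::finite \<Rightarrow> (int ^ 'd) set" where
  "lattice_nbrs x = {y. {x, y} \<in> lattice_edges}"

lemma finite_lattice_nbrs: "finite (lattice_nbrs x)"
proof -
  have "lattice_nbrs x \<subseteq> vec_lambda ` (Pi\<^sub>E UNIV (\<lambda>i. {x $ i - 1 .. x $ i + 1}))"
  proof
    fix y assume "y \<in> lattice_nbrs x"
    then have "l1dist x y = 1" by (simp add: lattice_nbrs_def doubleton_in_lattice_edges_iff)
    then have bound: "\<bar>x $ i - y $ i\<bar> \<le> 1" for i
      using member_le_sum[of i UNIV "\<lambda>i. \<bar>x $ i - y $ i\<bar>"] by (simp add: l1dist_def)
    have "y $ i \<in> {x $ i - 1 .. x $ i + 1}" for i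
      using bound[of i] by (auto simp: abs_le_iff)
    then show "y \<in> vec_lambda ` (Pi\<^sub>E UNIV (\<lambda>i. {x $ i - 1 .. x $ i + 1}))"
      by (intro image_eqI[of _ _ "vec_nth y"]) auto
  qed
  then show ?thesis by (rule finite_subset) (simp add: finite_PiE)
qed

lemma lattice_nbrs_nonempty: "lattice_nbrs (x :: int ^ 'd::finite) \<noteq> {}"
proof -
  obtain i :: 'd where True by simp
  have "l1dist x (x + axis i 1) = 1"
    unfolding l1dist_def axis_def by simp
  then show ?thesis by (auto simp: lattice_nbrs_def doubleton_in_lattice_edges_iff)
qed

lemma lattice_nbrs_translate: "lattice_nbrs (x + z) = (\<lambda>y. y + z) ` lattice_nbrs x"
proof (rule set_eqI)
  fix y
  have "y \<in> lattice_nbrs (x + z) \<longleftrightarrow> y - z \<in> lattice_nbrs x"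
    using lattice_edge_translate[of x z "y - z"] by (simp add: lattice_nbrs_def)
  also have "\<dots> \<longleftrightarrow> y \<in> (\<lambda>y. y + z) ` lattice_nbrs x"
    by (auto intro: image_eqI[of y _ "y - z"])
  finally show "y \<in> lattice_nbrs (x + z) \<longleftrightarrow> y \<in> (\<lambda>y. y + z) ` lattice_nbrs x" .
qed

section \<open>The nearest neighbour map\<close>

lemma nnd_edge_iff: "nnd_edge \<omega> x y \<longleftrightarrow> y \<in> lattice_nbrs x \<and> (\<forall>w\<in>lattice_nbrs x. \<omega> {x, y} \<le> \<omega> {x, w})"
  by (simp add: nnd_edge_def lattice_nbrs_def)

lemma ex_nnd_edge: "\<exists>y. nnd_edge \<omega> x y"
proof -
  let ?y = "arg_min_on (\<lambda>y. \<omega> {x, y}) (lattice_nbrs x)"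
  have "?y \<in> lattice_nbrs x"
    by (rule arg_min_if_finite(1)[OF finite_lattice_nbrs lattice_nbrs_nonempty])
  moreover have "\<forall>w\<in>lattice_nbrs x. \<omega> {x, ?y} \<le> \<omega> {x, w}"
    by (intro ballI arg_min_least[where f = "\<lambda>y. \<omega> {x, y}", simplified]
        finite_lattice_nbrs lattice_nbrs_nonempty)
  ultimately show ?thesis unfolding nnd_edge_iff by blast
qed

lemma nnd_edge_weight_min: "nnd_edge \<omega> x y \<Longrightarrow> {x, w} \<in> lattice_edges \<Longrightarrow> \<omega> {x, y} \<le> \<omega> {x, w}"
  by (simp add: nnd_edge_def)

lemma nnd_edge_weight_le:
  assumes "nnd_edge \<omega> x y" "nnd_edge \<omega> y z"
  shows "\<omega> {y, z} \<le> \<omega> {x, y}"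
  using assms by (simp add: nnd_edge_def insert_commute)

definition nnd_succ :: "'d::finite edge_weights \<Rightarrow> int ^ 'd \<Rightarrow> int ^ 'd" where
  "nnd_succ \<omega> x = (SOME y. nnd_edge \<omega> x y)"

lemma nnd_edge_nnd_succ: "nnd_edge \<omega> x (nnd_succ \<omega> x)"
  unfolding nnd_succ_def using ex_nnd_edge by (rule someI_ex)

lemma nnd_succ_in_lattice_nbrs: "nnd_succ \<omega> x \<in> lattice_nbrs x"
  using nnd_edge_nnd_succ[of \<omega> x] unfolding nnd_edge_iff by blast

definition no_ties :: "'d::finite edge_weights \<Rightarrow> bool" where
  "no_ties \<omega> \<longleftrightarrow> (\<forall>e\<in>lattice_edges. \<forall>f\<in>lattice_edges. e \<noteq> f \<longrightarrow> \<omega> e \<noteq> \<omega> f)"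

lemma no_tiesD: "no_ties \<omega> \<Longrightarrow> e \<in> lattice_edges \<Longrightarrow> f \<in> lattice_edges \<Longrightarrow> \<omega> e = \<omega> f \<Longrightarrow> e = f"
  unfolding no_ties_def by blast

lemma nnd_edge_iff_nnd_succ:
  assumes "no_ties \<omega>"
  shows "nnd_edge \<omega> x y \<longleftrightarrow> y = nnd_succ \<omega> x"
proof
  assume xy: "nnd_edge \<omega> x y"
  let ?y' = "nnd_succ \<omega> x"
  have edges: "{x, y} \<in> lattice_edges" "{x, ?y'} \<in> lattice_edges"
    using xy nnd_edge_nnd_succ[of \<omega> x] by (simp_all add: nnd_edge_def)
  have "\<omega> {x, y} = \<omega> {x, ?y'}"
    using xy nnd_edge_nnd_succ[of \<omega> x] edges by (intro order.antisym nnd_edge_weight_min)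
  then have "{x, y} = {x, ?y'}"
    using assms edges by (intro no_tiesD)
  moreover have "x \<noteq> y"
    using edges(1) by (rule lattice_edge_neq)
  ultimately show "y = ?y'"
    by (auto simp: doubleton_eq_iff)
qed (simp add: nnd_edge_nnd_succ)

lemma nnd_edge_weight_less:
  assumes "no_ties \<omega>" "nnd_edge \<omega> x y" "nnd_edge \<omega> y z" "z \<noteq> x"
  shows "\<omega> {y, z} < \<omega> {x, y}"
proof -
  have edges: "{y, z} \<in> lattice_edges" "{x, y} \<in> lattice_edges"
    using assms(2,3) by (simp_all add: nnd_edge_def)
  have "{y, z} \<noteq> {x, y}"
    using assms(4) by (auto simp: doubleton_eq_iff)
  then have "\<omega> {y, z} \<noteq> \<omega> {x, y}"
    using no_tiesD[OF assms(1) edges] by blast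
  with nnd_edge_weight_le[OF assms(2,3)] show ?thesis
    by simp
qed

lemma reaches_iff_in_orbit:
  assumes "no_ties \<omega>"
  shows "reaches \<omega> a b \<longleftrightarrow> b \<in> range (\<lambda>k. (nnd_succ \<omega> ^^ k) a)"
proof
  assume "reaches \<omega> a b"
  then show "b \<in> range (\<lambda>k. (nnd_succ \<omega> ^^ k) a)"
  proof (induction rule: rtranclp_induct)
    case base
    show ?case by (rule range_eqI[of _ _ 0]) simp
  next
    case (step y z)
    then obtain k where "y = (nnd_succ \<omega> ^^ k) a" by blast
    with step.hyps(2) show ?case
      by (intro range_eqI[of _ _ "Suc k"]) (simp add: nnd_edge_iff_nnd_succ[OF assms])
  qed
next
  have "reaches \<omega> a ((nnd_succ \<omega> ^^ k) a)" for k
    by (induction k) (auto intro: rtranclp.rtrancl_into_rtrancl nnd_edge_nnd_succ)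
  then show "b \<in> range (\<lambda>k. (nnd_succ \<omega> ^^ k) a) \<Longrightarrow> reaches \<omega> a b"
    by blast
qed

lemma shift_nbr_weight: "y \<in> lattice_nbrs x \<Longrightarrow> shift z \<omega> {x, y} = \<omega> {x + z, y + z}"
  by (simp add: shift_def lattice_nbrs_def)

lemma nnd_edge_shift: "nnd_edge (shift z \<omega>) x y \<longleftrightarrow> nnd_edge \<omega> (x + z) (y + z)"
  by (auto simp: nnd_edge_iff lattice_nbrs_translate shift_nbr_weight)

lemma reaches_shift: "reaches (shift z \<omega>) a b \<longleftrightarrow> reaches \<omega> (a + z) (b + z)"
proof
  show "reaches (shift z \<omega>) a b \<Longrightarrow> reaches \<omega> (a + z) (b + z)"
    by (induction rule: rtranclp_induct)
      (auto simp: nnd_edge_shift intro: rtranclp.rtrancl_into_rtrancl)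
next
  have "reaches \<omega> p q \<Longrightarrow> reaches (shift z \<omega>) (p - z) (q - z)" for p q
    by (induction rule: rtranclp_induct)
      (auto simp: nnd_edge_shift intro: rtranclp.rtrancl_into_rtrancl)
  then show "reaches \<omega> (a + z) (b + z) \<Longrightarrow> reaches (shift z \<omega>) a b"
    by fastforce
qed

section \<open>Vertex weights\<close>

definition step_weight :: "'d::finite edge_weights \<Rightarrow> int ^ 'd \<Rightarrow> int ^ 'd \<Rightarrow> int ^ 'd \<Rightarrow> real" where
  "step_weight \<omega> b c d =
     (if nnd_edge \<omega> b c \<and> nnd_edge \<omega> c d
      then arctan (\<omega> {b, c}) - arctan (\<omega> {c, d}) + of_bool (d = b) else 0)"

text \<open>Summing over all two-step paths, rather than evaluating at the nearest neighbour path,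
  makes the weight measurable and translation covariant for every configuration.\<close>

definition vertex_weight :: "'d::finite edge_weights \<Rightarrow> int ^ 'd \<Rightarrow> real" where
  "vertex_weight \<omega> b = (\<Sum>c\<in>lattice_nbrs b. \<Sum>d\<in>lattice_nbrs c. step_weight \<omega> b c d)"

lemma step_weight_pos:
  assumes "no_ties \<omega>" "nnd_edge \<omega> b c" "nnd_edge \<omega> c d"
  shows "0 < step_weight \<omega> b c d"
proof (cases "d = b")
  case True
  then show ?thesis
    using assms(2,3) by (simp add: step_weight_def insert_commute)
next
  case False
  then have "arctan (\<omega> {c, d}) < arctan (\<omega> {b, c})"
    using nnd_edge_weight_less[OF assms] by (simp add: arctan_less_iff)
  then show ?thesis
    using assms(2,3) False by (simp add: step_weight_def)
qed

lemma vertex_weight_eq: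
  assumes "no_ties \<omega>"
  shows "vertex_weight \<omega> b = step_weight \<omega> b (nnd_succ \<omega> b) (nnd_succ \<omega> (nnd_succ \<omega> b))"
proof -
  let ?c = "nnd_succ \<omega> b"
  let ?d = "nnd_succ \<omega> ?c"
  have off_path: "step_weight \<omega> b c d = 0" if "c \<noteq> ?c \<or> d \<noteq> nnd_succ \<omega> c" for c d
    using that by (auto simp: step_weight_def nnd_edge_iff_nnd_succ[OF assms])
  have "vertex_weight \<omega> b = (\<Sum>d\<in>lattice_nbrs ?c. step_weight \<omega> b ?c d)"
    unfolding vertex_weight_def
    by (rule sum_eq_single) (auto simp: finite_lattice_nbrs nnd_succ_in_lattice_nbrs off_path)
  also have "\<dots> = step_weight \<omega> b ?c ?d"
    by (rule sum_eq_single) (auto simp: finite_lattice_nbrs nnd_succ_in_lattice_nbrs off_path)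
  finally show ?thesis .
qed

lemma vertex_weight_pos: "no_ties \<omega> \<Longrightarrow> 0 < vertex_weight \<omega> b"
  by (simp add: vertex_weight_eq step_weight_pos nnd_edge_nnd_succ)

lemma step_weight_shift: "step_weight (shift z \<omega>) b c d = step_weight \<omega> (b + z) (c + z) (d + z)"
proof (cases "nnd_edge \<omega> (b + z) (c + z) \<and> nnd_edge \<omega> (c + z) (d + z)")
  case True
  then have "nnd_edge (shift z \<omega>) b c" "nnd_edge (shift z \<omega>) c d"
    by (simp_all add: nnd_edge_shift)
  then have "c \<in> lattice_nbrs b" "d \<in> lattice_nbrs c"
    by (simp_all add: nnd_edge_iff)
  with True show ?thesis
    by (simp add: step_weight_def nnd_edge_shift shift_nbr_weight)
qed (auto simp: step_weight_def nnd_edge_shift)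

lemma vertex_weight_shift: "vertex_weight (shift z \<omega>) b = vertex_weight \<omega> (b + z)"
proof -
  have inj: "inj_on (\<lambda>y. y + z) A" for A
    by (simp add: inj_on_def)
  show ?thesis
    unfolding vertex_weight_def
    by (simp add: lattice_nbrs_translate sum.reindex[OF inj] step_weight_shift)
qed

lemma sum_vertex_weight_reachable_le:
  assumes "no_ties \<omega>" "finite B" "B \<subseteq> {b. reaches \<omega> a b}"
  shows "(\<Sum>b\<in>B. vertex_weight \<omega> b) \<le> pi + 2"
proof -
  let ?f = "nnd_succ \<omega>"
  define g where "g b = arctan (\<omega> {b, ?f b})" for b
  have orbit: "B \<subseteq> range (\<lambda>k. (?f ^^ k) a)"
    using assms(3) reaches_iff_in_orbit[OF assms(1)] by blast
  have "vertex_weight \<omega> b = (g b - g (?f b)) + of_bool (?f (?f b) = b)" for b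
    by (simp add: vertex_weight_eq[OF assms(1)] step_weight_def nnd_edge_nnd_succ g_def)
  then have split: "(\<Sum>b\<in>B. vertex_weight \<omega> b)
      = (\<Sum>b\<in>B. g b - g (?f b)) + (\<Sum>b\<in>B. of_bool (?f (?f b) = b))"
    by (simp add: sum.distrib)
  have telescope: "(\<Sum>b\<in>B. g b - g (?f b)) \<le> 2 * (pi / 2)"
  proof (rule sum_orbit_decrements_le[OF assms(2) orbit])
    show "g (?f b) \<le> g b" for b
      unfolding g_def using nnd_edge_weight_le[OF nnd_edge_nnd_succ nnd_edge_nnd_succ]
      by (simp add: arctan_le_iff)
    show "\<bar>g b\<bar> \<le> pi / 2" for b
      unfolding g_def abs_le_iff using arctan_bounded[of "\<omega> {b, ?f b}"] by linarith
  qed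
  from orbit_period2_points_subset[of ?f a]
  obtain b0 where "{b \<in> range (\<lambda>k. (?f ^^ k) a). ?f (?f b) = b} \<subseteq> {b0, ?f b0}" ..
  then have "B \<inter> {b. ?f (?f b) = b} \<subseteq> {b0, ?f b0}"
    using orbit by auto
  then have "card (B \<inter> {b. ?f (?f b) = b}) \<le> card {b0, ?f b0}"
    by (rule card_mono[rotated]) simp
  also have "\<dots> \<le> 2"
    by (rule card_insert_le_m1) simp_all
  finally have cycles: "(\<Sum>b\<in>B. of_bool (?f (?f b) = b)) \<le> (2 :: real)"
    using assms(2) by simp
  show ?thesis
    using split telescope cycles by simp
qed

section \<open>Measurability\<close>

lemma borel_measurable_nbr_weight:
  "y \<in> lattice_nbrs x \<Longrightarrow> (\<lambda>\<omega>. \<omega> {x, y}) \<in> borel_measurable Omega"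
  unfolding Omega_def lattice_nbrs_def by (rule measurable_component_singleton) simp

lemma measurable_shift: "shift z \<in> Omega \<rightarrow>\<^sub>M Omega"
proof -
  have "(\<lambda>\<omega>. \<lambda>e\<in>lattice_edges. \<omega> ((\<lambda>v. v + z) ` e)) \<in> Omega \<rightarrow>\<^sub>M Omega"
    unfolding Omega_def
    by (intro measurable_restrict measurable_component_singleton image_translate_lattice_edge)
  then show ?thesis
    by (simp add: shift_def[abs_def])
qed

lemma pred_nnd_edge[measurable]: "Measurable.pred Omega (\<lambda>\<omega>. nnd_edge \<omega> x y)"
proof (cases "y \<in> lattice_nbrs x")
  case True
  have "Measurable.pred Omega (\<lambda>\<omega>. \<omega> {x, y} \<le> \<omega> {x, w})" if "w \<in> lattice_nbrs x" for w
    unfolding pred_def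
    using borel_measurable_nbr_weight[OF True] borel_measurable_nbr_weight[OF that]
    by (rule borel_measurable_le)
  then show ?thesis
    unfolding nnd_edge_iff using True finite_lattice_nbrs
    by (intro pred_intros_logic pred_intros_finite) auto
qed (simp add: nnd_edge_iff)

lemma pred_reaches[measurable]: "Measurable.pred Omega (\<lambda>\<omega>. reaches \<omega> a b)"
proof -
  have "Measurable.pred Omega (\<lambda>\<omega>. (nnd_edge \<omega> ^^ n) a b)" for n
  proof (induction n arbitrary: b)
    case (Suc n)
    then show ?case
      by (simp add: relcompp_apply) measurable
  qed simp
  then show ?thesis
    unfolding rtranclp_power by measurable
qed

lemma borel_measurable_step_weight[measurable]:
  "(\<lambda>\<omega>. step_weight \<omega> b c d) \<in> borel_measurable Omega"
proof (cases "c \<in> lattice_nbrs b \<and> d \<in> lattice_nbrs c")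
  case True
  note [measurable] = borel_measurable_nbr_weight[OF True[THEN conjunct1]]
    borel_measurable_nbr_weight[OF True[THEN conjunct2]]
  show ?thesis
    unfolding step_weight_def by measurable
next
  case False
  then show ?thesis
    by (auto simp: step_weight_def nnd_edge_iff)
qed

lemma AE_no_ties:
  fixes M :: "'d::finite edge_weights measure"
  assumes "finite_measure M" and sets_M: "sets M = sets Omega"
    and ties_null: "\<And>e f. e \<in> lattice_edges \<Longrightarrow> f \<in> lattice_edges \<Longrightarrow> e \<noteq> f \<Longrightarrow>
      measure M {\<omega> \<in> space M. \<omega> e = \<omega> f} = 0"
  shows "AE \<omega> in M. no_ties \<omega>"
  unfolding no_ties_def
proof (intro AE_ball_countable' countable_lattice_edges)
  fix e f :: "(int ^ 'd) set"
  assume e: "e \<in> lattice_edges" and f: "f \<in> lattice_edges"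
  show "AE \<omega> in M. e \<noteq> f \<longrightarrow> \<omega> e \<noteq> \<omega> f"
  proof (cases "e = f")
    case False
    have [measurable]: "(\<lambda>\<omega>. \<omega> e) \<in> borel_measurable M" "(\<lambda>\<omega>. \<omega> f) \<in> borel_measurable M"
      unfolding measurable_cong_sets[OF sets_M refl] Omega_def
      using e f by (auto intro: measurable_component_singleton)
    have "{\<omega> \<in> space M. \<omega> e = \<omega> f} \<in> null_sets M"
      using ties_null[OF e f False] finite_measure.emeasure_eq_measure[OF assms(1)]
      by (simp add: null_sets_def)
    then show ?thesis
      by (rule AE_I') auto
  qed simp
qed

section \<open>Transporting the vertex weights\<close>

definition mass_sent :: "int ^ 'd \<Rightarrow> int ^ 'd \<Rightarrow> 'd::finite edge_weights \<Rightarrow> ennreal" where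
  "mass_sent a b \<omega> = (if reaches \<omega> a b then ennreal (vertex_weight \<omega> b) else 0)"

lemma mass_sent_shift: "mass_sent a b (shift z \<omega>) = mass_sent (a + z) (b + z) \<omega>"
  by (simp add: mass_sent_def reaches_shift vertex_weight_shift)

lemma borel_measurable_mass_sent: "mass_sent a b \<in> borel_measurable Omega"
  unfolding mass_sent_def[abs_def] vertex_weight_def by measurable

lemma mass_sent_total_le:
  fixes \<omega> :: "'d::finite edge_weights"
  assumes "no_ties \<omega>"
  shows "(\<integral>\<^sup>+b. mass_sent a b \<omega> \<partial>count_space UNIV) \<le> ennreal (pi + 2)"
proof (rule nn_integral_count_space_le)
  fix F :: "(int ^ 'd) set"
  assume "finite F"
  let ?R = "{b \<in> F. reaches \<omega> a b}"
  have "(\<Sum>b\<in>F. mass_sent a b \<omega>) = (\<Sum>b\<in>?R. ennreal (vertex_weight \<omega> b))"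
    using \<open>finite F\<close> by (simp add: mass_sent_def sum.inter_filter)
  also have "\<dots> = ennreal (\<Sum>b\<in>?R. vertex_weight \<omega> b)"
    using vertex_weight_pos[OF assms] by (simp add: less_imp_le)
  also have "\<dots> \<le> ennreal (pi + 2)"
    using \<open>finite F\<close> by (intro ennreal_leI sum_vertex_weight_reachable_le[OF assms]) auto
  finally show "(\<Sum>b\<in>F. mass_sent a b \<omega>) \<le> ennreal (pi + 2)" .
qed

lemma finite_reaching_if_mass_received_finite:
  assumes "no_ties \<omega>" "(\<integral>\<^sup>+a. mass_sent a x \<omega> \<partial>count_space UNIV) \<noteq> \<infinity>"
  shows "finite {a. reaches \<omega> a x}"
proof (rule ccontr)
  assume infinite: "infinite {a. reaches \<omega> a x}"
  have "(\<integral>\<^sup>+a. mass_sent a x \<omega> \<partial>count_space UNIV)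
      = (\<integral>\<^sup>+a. ennreal (vertex_weight \<omega> x) * indicator {a. reaches \<omega> a x} a \<partial>count_space UNIV)"
    by (intro nn_integral_cong) (simp add: mass_sent_def indicator_def)
  also have "\<dots> = ennreal (vertex_weight \<omega> x) * emeasure (count_space UNIV) {a. reaches \<omega> a x}"
    by (rule nn_integral_cmult_indicator) simp
  also have "\<dots> = \<infinity>"
    using infinite vertex_weight_pos[OF assms(1), of x] by (simp add: ennreal_mult_top)
  finally show False
    using assms(2) by simp
qed

theorem theorem1:
  fixes P :: "((int ^ 'd::finite) set \<Rightarrow> real) measure"
  assumes "prob_space P"
    and "sets P = sets (Omega :: ((int ^ 'd) set \<Rightarrow> real) measure)"
    and A1: "\<And>z :: int ^ 'd. distr P P (shift z) = P"
    and A2: "\<And>e f. e \<in> (lattice_edges :: (int ^ 'd) set set) \<Longrightarrow> f \<in> lattice_edges \<Longrightarrow> e \<noteq> f \<Longrightarrow>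
             measure P {\<omega> \<in> space P. \<omega> e = \<omega> f} = 0"
  shows "AE \<omega> in P. \<forall>x :: int ^ 'd. finite {y. reaches \<omega> y x}"
proof -
  interpret prob_space P by fact
  have shift_measurable: "shift z \<in> P \<rightarrow>\<^sub>M P" for z :: "int ^ 'd"
    using measurable_shift by (simp add: measurable_cong_sets[OF assms(2) assms(2)])
  have mass_measurable: "mass_sent a b \<in> borel_measurable P" for a b :: "int ^ 'd"
    using borel_measurable_mass_sent by (simp add: measurable_cong_sets[OF assms(2) refl])
  have no_ties: "AE \<omega> in P. no_ties \<omega>"
    using finite_measure_axioms assms(2) A2 by (rule AE_no_ties)
  have "AE \<omega> in P. finite {y. reaches \<omega> y x}" for x
  proof -
    have "(\<integral>\<^sup>+\<omega>. (\<integral>\<^sup>+a. mass_sent a x \<omega> \<partial>count_space UNIV) \<partial>P)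
        = (\<integral>\<^sup>+\<omega>. (\<integral>\<^sup>+b. mass_sent x b \<omega> \<partial>count_space UNIV) \<partial>P)"
      by (rule mass_transport[where T = shift, symmetric])
        (simp_all add: shift_measurable A1 mass_measurable mass_sent_shift)
    also have "\<dots> \<le> (\<integral>\<^sup>+\<omega>. ennreal (pi + 2) \<partial>P)"
    proof (rule nn_integral_mono_AE)
      show "AE \<omega> in P. (\<integral>\<^sup>+b. mass_sent x b \<omega> \<partial>count_space UNIV) \<le> ennreal (pi + 2)"
        using no_ties by eventually_elim (rule mass_sent_total_le)
    qed
    also have "\<dots> < \<infinity>"
      by (simp add: emeasure_space_1)
    finally have "AE \<omega> in P. (\<integral>\<^sup>+a. mass_sent a x \<omega> \<partial>count_space UNIV) \<noteq> \<infinity>"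
      by (intro nn_integral_PInf_AE borel_measurable_nn_integral_count_space mass_measurable) simp
    with no_ties show ?thesis
      by eventually_elim (rule finite_reaching_if_mass_received_finite)
  qed
  then show ?thesis
    by (simp add: AE_all_countable)
qed

end
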